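(* For $i\ge1$ let $$y_i=(1+\alpha)\,\mathbf E\Big[\mathbb I_{\{Z\le i,\ \Lambda\ge 1\}}\frac{\Gamma(i+2\Lambda)}{\Gamma(i+2\Lambda+\alpha+2)}\cdot\frac{\Gamma(Z+2\Lambda+\alpha+1)}{\Gamma(Z+2\Lambda)}\Big].$$ Then, as $i\to\infty$, $$y_i\sim \lambda(1+\alpha)^2\Gamma(2+\alpha)\, i^{-2-\alpha}\ln i,$$ where $a_i\sim b_i$ means $a_i/b_i\to1$.
   Context: Fix $\lambda>0$ and an integer $k\ge1$, and let $\alpha=k/\lambda$. $\Lambda$ is a Poisson random variable with mean $\lambda$; $Z=\sum_{i=1}^{\Lambda}T_i$, where $T_1,T_2,\dots$ are i.i.d., independent of $\Lambda$, with $\mathbf P(T_1=j)=x_{j+1}$, $x_{j+1}=(1+\alpha)\Gamma(2+\alpha)\frac{\Gamma(j+1)}{\Gamma(3+\alpha+j)}$ for $j=0,1,2,\dots$. *)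

theory Defs
  imports "HOL-Analysis.Analysis" "HOL-Library.Landau_Symbols"
begin

text \<open>Law of T: P(T = j) = x_{j+1} = (1+a) Gamma(2+a) Gamma(j+1) / Gamma(3+a+j).\<close>
definition T_prob :: "real \<Rightarrow> nat \<Rightarrow> real" where
  "T_prob a j = (1 + a) * Gamma (2 + a) * Gamma (real j + 1) / Gamma (3 + a + real j)"

fun conv_pow :: "(nat \<Rightarrow> real) \<Rightarrow> nat \<Rightarrow> nat \<Rightarrow> real" where
  "conv_pow p 0 z = (if z = 0 then 1 else 0)"
| "conv_pow p (Suc n) z = (\<Sum>j\<le>z. conv_pow p n (z - j) * p j)"

definition poisson_prob :: "real \<Rightarrow> nat \<Rightarrow> real" where
  "poisson_prob lam n = exp (- lam) * lam ^ n / fact n"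

text \<open>y_i = (1+a) E[ 1{Z<=i, Lambda>=1} G(i+2L)/G(i+2L+a+2) * G(Z+2L+a+1)/G(Z+2L) ],
  with the expectation written out over the joint law of (Lambda, Z):
  P(Lambda = n, Z = z) = poisson_prob lam n * conv_pow (T_prob a) n z.\<close>
definition y_seq :: "real \<Rightarrow> nat \<Rightarrow> nat \<Rightarrow> real" where
  "y_seq lam k i = (let a = real k / lam in
     (1 + a) * (\<Sum>n. if n \<ge> 1 then poisson_prob lam n *
        (\<Sum>z\<le>i. conv_pow (T_prob a) n z *
           (Gamma (real i + 2 * real n) / Gamma (real i + 2 * real n + a + 2)) *
           (Gamma (real z + 2 * real n + a + 1) / Gamma (real z + 2 * real n)))
      else 0))"

end

theory Submission
  imports Defs "HOL-Real_Asymp.Real_Asymp"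
begin

(* Conditioning on Lambda = n, the n-th term of y_i is P(Lambda = n) times the product of
   Gamma(i+2n)/Gamma(i+2n+alpha+2) ~ i^(-2-alpha) and the truncated moment
   sum_{z<=i} P(Z_n = z) Gamma(z+2n+alpha+1)/Gamma(z+2n), where Z_n = T_1 + ... + T_n.
   Since P(T = j) ~ c j^(-2-alpha) with c = (1+alpha) Gamma(2+alpha), the tail is subexponential
   in the local sense: P(Z_n = z) ~ n c z^(-2-alpha), with a bound K^n z^(-2-alpha) uniform in z.
   Hence the summands of the truncated moment behave like n c / z, and the moment grows like
   n c ln i.  The bounds K^n are summable against the Poisson weights, so by Tannery's theorem
   the limits may be taken termwise, and E Lambda = lambda produces the constant. *)

section \<open>Ratios of Gamma values\<close>

definition Gamma_ratio :: "real \<Rightarrow> real \<Rightarrow> real" where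
  "Gamma_ratio s x = Gamma (x + s) / Gamma x"

lemma Gamma_ratio_pos: "x > 0 \<Longrightarrow> x + s > 0 \<Longrightarrow> Gamma_ratio s x > 0"
  by (simp add: Gamma_ratio_def)

lemma Gamma_plus1_real: "x > (0::real) \<Longrightarrow> Gamma (x + 1) = x * Gamma x"
  by (rule Gamma_plus1) (auto elim!: nonpos_Ints_cases)

lemma Gamma_ratio_telescope:
  assumes "x > 0" "x + s > 0"
  shows "inverse (Gamma_ratio s x) - inverse (Gamma_ratio s (x + 1)) = s / Gamma_ratio (s + 1) x"
proof -
  have "Gamma (x + 1) = x * Gamma x" "Gamma (x + 1 + s) = (x + s) * Gamma (x + s)"
    "Gamma (x + (s + 1)) = (x + s) * Gamma (x + s)"
    using Gamma_plus1_real[of x] Gamma_plus1_real[of "x + s"] assms by (simp_all add: add_ac)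
  moreover have "x + s \<noteq> 0" "Gamma (x + s) \<noteq> 0"
    using assms by (auto simp: Gamma_eq_zero_iff elim!: nonpos_Ints_cases)
  ultimately show ?thesis
    unfolding Gamma_ratio_def using assms by (simp add: divide_simps) (simp add: algebra_simps)
qed

text \<open>Gauss' limit, obtained as the quotient of the Euler products for \<open>Gamma (m + s)\<close>
  and \<open>Gamma m\<close>.\<close>

lemma Gamma_shift_LIMSEQ:
  assumes "m > 0" "m + s > 0"
  shows "(\<lambda>n. real n powr s * Gamma (real n + m + 1) / Gamma (real n + m + s + 1)) \<longlonglongrightarrow> 1"
    (is "?f \<longlonglongrightarrow> 1")
proof -
  have not_pole: "z \<notin> \<int>\<^sub>\<le>\<^sub>0" if "z > 0" for z :: real
    using that by (auto elim!: nonpos_Ints_cases)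
  have "(\<lambda>n. Gamma_series (m + s) n / Gamma_series m n) \<longlonglongrightarrow> Gamma (m + s) / Gamma m"
    using assms by (intro tendsto_intros) (auto simp: Gamma_eq_zero_iff elim!: nonpos_Ints_cases)
  moreover have "eventually (\<lambda>n. Gamma_series (m + s) n / Gamma_series m n
      = Gamma (m + s) / Gamma m * ?f n) sequentially"
  proof (rule eventually_sequentiallyI[of 1])
    fix n :: nat assume "n \<ge> 1"
    have "pochhammer z (n + 1) = Gamma (real n + z + 1) / Gamma z" if "z > 0" for z
      using pochhammer_Gamma[OF not_pole[OF that], of "n + 1"] by (simp add: add_ac)
    moreover have "Gamma (real n + z + 1) > 0" "Gamma z > 0" if "z > 0" for z
      using that by simp_all
    ultimately show "Gamma_series (m + s) n / Gamma_series m n = Gamma (m + s) / Gamma m * ?f n"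
      using assms \<open>n \<ge> 1\<close> unfolding Gamma_series_def
      by (simp add: powr_def exp_add field_simps add_ac)
  qed
  ultimately have "(\<lambda>n. Gamma (m + s) / Gamma m * ?f n) \<longlonglongrightarrow> Gamma (m + s) / Gamma m"
    by (rule Lim_transform_eventually)
  moreover have "Gamma (m + s) / Gamma m \<noteq> 0"
    using assms by (auto simp: Gamma_eq_zero_iff elim!: nonpos_Ints_cases)
  ultimately show ?thesis
    using tendsto_mult_left_iff[of "Gamma (m + s) / Gamma m" ?f 1] by simp
qed

lemma Gamma_ratio_LIMSEQ:
  assumes "m > 0" "m + s > 0"
  shows "(\<lambda>n. Gamma_ratio s (real n + m) / (real n + r) powr s) \<longlonglongrightarrow> 1"
proof -
  define f where "f n = real n powr s * Gamma (real n + m + 1) / Gamma (real n + m + s + 1)" for n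
  define g where "g n = (real n + m) / (real n + m + s) * (real n / (real n + r)) powr s" for n
  have r_pos: "eventually (\<lambda>n. real n + r > 0) sequentially"
    by real_asymp
  have "f \<longlonglongrightarrow> 1"
    unfolding f_def using assms by (rule Gamma_shift_LIMSEQ)
  moreover have "g \<longlonglongrightarrow> 1"
    unfolding g_def by real_asymp
  ultimately have "(\<lambda>n. inverse (f n) * g n) \<longlonglongrightarrow> 1"
    using tendsto_mult[OF tendsto_inverse] by fastforce
  moreover have "eventually (\<lambda>n. inverse (f n) * g n
      = Gamma_ratio s (real n + m) / (real n + r) powr s) sequentially"
    using r_pos eventually_ge_at_top[of 1]
  proof eventually_elim
    case (elim n)
    have "inverse (N * (A * GA) / (B * GB)) * (A / B * (N / R)) = GB / GA / R"
      if "N > 0" "A > 0" "B > 0" "GA > 0" "GB > 0" "R > 0" for N A B GA GB R :: real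
      using that by (simp add: field_simps)
    moreover have "Gamma (real n + m + 1) = (real n + m) * Gamma (real n + m)"
      "Gamma (real n + m + s + 1) = (real n + m + s) * Gamma (real n + m + s)"
      using Gamma_plus1_real assms by (simp_all add: add_pos_pos)
    ultimately show ?case
      using elim assms unfolding f_def g_def Gamma_ratio_def by (simp add: powr_divide)
  qed
  ultimately show ?thesis
    by (rule Lim_transform_eventually)
qed

lemma Gamma_ratio_bounds:
  assumes "1 + s > 0"
  obtains C where "C > 0"
    "\<And>x::nat. x \<ge> 1 \<Longrightarrow> Gamma_ratio s (real x) \<le> C * real x powr s"
    "\<And>x::nat. x \<ge> 1 \<Longrightarrow> real x powr s \<le> C * Gamma_ratio s (real x)"
proof -
  define h where "h n = Gamma_ratio s (real n + 1) / (real n + 1) powr s" for n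
  have h: "h \<longlonglongrightarrow> 1"
    unfolding h_def using Gamma_ratio_LIMSEQ[of 1 s 1] assms by simp
  have h_pos: "h n > 0" for n
    unfolding h_def using assms by (simp add: Gamma_ratio_pos)
  obtain C1 where "C1 > 0" and C1: "\<And>n. norm (h n) \<le> C1"
    using BseqE[OF convergent_imp_Bseq[OF convergentI[OF h]]] by blast
  obtain C2 where C2: "\<And>n. norm (inverse (h n)) \<le> C2"
    using BseqE[OF convergent_imp_Bseq[OF convergentI[OF tendsto_inverse[OF h]]]] by auto
  have C: "h n \<le> max C1 C2" "inverse (h n) \<le> max C1 C2" for n
    using C1[of n] C2[of n] h_pos[of n] by (simp_all add: abs_of_pos max.coboundedI1 max.coboundedI2)
  show ?thesis
  proof (rule that[of "max C1 C2"])
    show "max C1 C2 > 0" using \<open>C1 > 0\<close> by simp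
    fix x :: nat assume "x \<ge> 1"
    then obtain n where x: "x = Suc n" by (cases x) auto
    have "Gamma_ratio s (real x) > 0" "real x powr s > 0"
      using x assms by (simp_all add: Gamma_ratio_pos)
    then show "Gamma_ratio s (real x) \<le> max C1 C2 * real x powr s"
      and "real x powr s \<le> max C1 C2 * Gamma_ratio s (real x)"
      using C[of n] unfolding h_def x by (simp_all add: field_simps add_ac)
  qed
qed

lemma powr_div_Gamma_ratio_le:
  assumes "s \<ge> 0"
  obtains C where "C > 0"
    "\<And>x y :: nat. 1 \<le> y \<Longrightarrow> x \<le> y \<Longrightarrow> real x powr s / Gamma_ratio s (real y) \<le> C"
proof -
  have "1 + s > 0" using assms by simp
  then obtain C where "C > 0"
    and "\<And>y::nat. y \<ge> 1 \<Longrightarrow> Gamma_ratio s (real y) \<le> C * real y powr s"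
    and C: "\<And>y::nat. y \<ge> 1 \<Longrightarrow> real y powr s \<le> C * Gamma_ratio s (real y)"
    by (rule Gamma_ratio_bounds) blast
  show ?thesis
  proof (rule that[OF \<open>C > 0\<close>])
    fix x y :: nat assume "1 \<le> y" "x \<le> y"
    then have "real x powr s \<le> C * Gamma_ratio s (real y)"
      using C[of y] assms by (meson of_nat_0_le_iff of_nat_mono order_trans powr_mono2)
    moreover have "Gamma_ratio s (real y) > 0"
      using \<open>1 \<le> y\<close> assms by (intro Gamma_ratio_pos) auto
    ultimately show "real x powr s / Gamma_ratio s (real y) \<le> C"
      by (simp add: divide_le_eq)
  qed
qed

lemma Gamma_ratio_le_three_pow:
  assumes "s \<ge> 0"
  obtains C where "C > 0"
    "\<And>n z. n \<ge> 1 \<Longrightarrow> Gamma_ratio s (real z + 2 * real n) \<le> C * (3 powr s) ^ n * (real z + 1) powr s"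
proof -
  have "1 + s > 0" using assms by simp
  then obtain C where "C > 0"
    and C: "\<And>x::nat. x \<ge> 1 \<Longrightarrow> Gamma_ratio s (real x) \<le> C * real x powr s"
    and "\<And>x::nat. x \<ge> 1 \<Longrightarrow> real x powr s \<le> C * Gamma_ratio s (real x)"
    by (rule Gamma_ratio_bounds) blast
  show ?thesis
  proof (rule that[OF \<open>C > 0\<close>])
    fix n z :: nat assume "n \<ge> 1"
    have "2 * n + 1 \<le> 3 ^ n"
      by (induction n) auto
    then have "real (2 * n + 1) \<le> real (3 ^ n)"
      by (simp only: of_nat_le_iff)
    then have "(2 * real n + 1) * (real z + 1) \<le> 3 ^ n * (real z + 1)"
      by (intro mult_right_mono) simp_all
    moreover have "real z + 2 * real n \<le> (2 * real n + 1) * (real z + 1)"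
      by (simp add: algebra_simps)
    ultimately have "real z + 2 * real n \<le> 3 ^ n * (real z + 1)"
      by linarith
    then have "(real z + 2 * real n) powr s \<le> (3 ^ n * (real z + 1)) powr s"
      using assms by (intro powr_mono2) auto
    also have "\<dots> = (3 powr real n) powr s * (real z + 1) powr s"
      by (simp add: powr_mult powr_realpow)
    also have "\<dots> = (3 powr s) ^ n * (real z + 1) powr s"
      by (simp add: powr_powr powr_power mult.commute)
    finally have "C * (real z + 2 * real n) powr s \<le> C * ((3 powr s) ^ n * (real z + 1) powr s)"
      using \<open>C > 0\<close> by simp
    moreover have "Gamma_ratio s (real z + 2 * real n) \<le> C * (real z + 2 * real n) powr s"
      using C[of "z + 2 * n"] \<open>n \<ge> 1\<close> by simp
    ultimately show "Gamma_ratio s (real z + 2 * real n) \<le> C * (3 powr s) ^ n * (real z + 1) powr s"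
      by (simp add: mult.assoc)
  qed
qed

section \<open>Logarithmic averages\<close>

lemma abs_diff_le_telescope:
  fixes f g :: "nat \<Rightarrow> real"
  assumes "\<And>n. n \<ge> N \<Longrightarrow> \<bar>f (Suc n) - f n\<bar> \<le> g (Suc n) - g n" and "n \<ge> N"
  shows "\<bar>f n - f N\<bar> \<le> g n - g N"
  using assms(2)
proof (induction n rule: dec_induct)
  case (step n)
  then show ?case
    using assms(1)[of n] by arith
qed simp

lemma Stolz_Cesaro:
  fixes a b :: "nat \<Rightarrow> real"
  assumes b_mono: "\<And>n. b n < b (Suc n)" and b_top: "filterlim b at_top sequentially"
    and ratio: "(\<lambda>n. (a (Suc n) - a n) / (b (Suc n) - b n)) \<longlonglongrightarrow> L"
  shows "(\<lambda>n. a n / b n) \<longlonglongrightarrow> L"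
proof (rule LIMSEQ_I)
  fix r :: real assume "r > 0"
  obtain N where N: "\<And>n. n \<ge> N \<Longrightarrow> \<bar>(a (Suc n) - a n) / (b (Suc n) - b n) - L\<bar> < r / 2"
    using LIMSEQ_D[OF ratio, of "r / 2"] \<open>r > 0\<close> by auto
  have "\<bar>(a (Suc n) - L * b (Suc n)) - (a n - L * b n)\<bar> \<le> r / 2 * b (Suc n) - r / 2 * b n"
    if "n \<ge> N" for n
  proof -
    have "b (Suc n) - b n > 0" using b_mono[of n] by simp
    with N[OF that] show ?thesis by (simp add: abs_less_iff field_simps)
  qed
  from abs_diff_le_telescope[of N "\<lambda>n. a n - L * b n", OF this]
  have tele: "\<bar>(a n - L * b n) - (a N - L * b N)\<bar> \<le> r / 2 * b n - r / 2 * b N" if "n \<ge> N" for n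
    using that by blast
  define K where "K = \<bar>a N - L * b N\<bar> + r / 2 * \<bar>b N\<bar>"
  have "K \<ge> 0" using \<open>r > 0\<close> by (simp add: K_def)
  obtain M where M: "\<And>n. n \<ge> M \<Longrightarrow> b n \<ge> 2 * K / r + 1"
    using b_top unfolding filterlim_at_top eventually_sequentially by blast
  show "\<exists>no. \<forall>n\<ge>no. norm (a n / b n - L) < r"
  proof (intro exI allI impI)
    fix n assume "n \<ge> max N M"
    then have "b n \<ge> 2 * K / r + 1" using M by simp
    have "- (r / 2 * b N) \<le> r / 2 * \<bar>b N\<bar>"
      using \<open>r > 0\<close> by (simp add: abs_if)
    with tele[of n] \<open>n \<ge> max N M\<close> have "\<bar>a n - L * b n\<bar> \<le> K + r / 2 * b n"
      unfolding K_def by arith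
    moreover have "2 * K / r \<ge> 0" using \<open>K \<ge> 0\<close> \<open>r > 0\<close> by simp
    ultimately have "b n > 0" "\<bar>a n - L * b n\<bar> < r * b n"
      using \<open>b n \<ge> 2 * K / r + 1\<close> \<open>r > 0\<close> by (linarith, simp add: field_simps)
    then show "norm (a n / b n - L) < r"
      by (simp add: field_simps flip: abs_mult)
  qed
qed

lemma sum_div_ln_LIMSEQ:
  fixes d :: "nat \<Rightarrow> real"
  assumes "(\<lambda>z. real z * d z) \<longlonglongrightarrow> L"
  shows "(\<lambda>i. (\<Sum>z\<le>i. d z) / ln (real i)) \<longlonglongrightarrow> L"
proof -
  have "(\<lambda>n. real (Suc n) * d (Suc n) * (1 / ((real n + 1) * (ln (real n + 2) - ln (real n + 1)))))
      \<longlonglongrightarrow> L * 1"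
    by (intro tendsto_mult LIMSEQ_Suc[OF assms[unfolded of_nat_Suc]]) real_asymp
  then have "(\<lambda>n. ((\<Sum>z\<le>Suc n. d z) - (\<Sum>z\<le>n. d z)) / (ln (real (Suc n) + 1) - ln (real n + 1)))
      \<longlonglongrightarrow> L"
    by (simp add: add_ac)
  then have "(\<lambda>i. (\<Sum>z\<le>i. d z) / ln (real i + 1)) \<longlonglongrightarrow> L"
  proof (rule Stolz_Cesaro[rotated 2])
    show "filterlim (\<lambda>i. ln (real i + 1)) at_top sequentially" by real_asymp
  qed simp
  moreover have "(\<lambda>i. ln (real i + 1) / ln (real i)) \<longlonglongrightarrow> 1"
    by real_asymp
  ultimately have "(\<lambda>i. (\<Sum>z\<le>i. d z) / ln (real i + 1) * (ln (real i + 1) / ln (real i))) \<longlonglongrightarrow> L * 1"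
    by (rule tendsto_mult)
  moreover have "eventually (\<lambda>i. (\<Sum>z\<le>i. d z) / ln (real i + 1) * (ln (real i + 1) / ln (real i))
      = (\<Sum>z\<le>i. d z) / ln (real i)) sequentially"
    by (rule eventually_sequentiallyI[of 1]) simp
  ultimately show ?thesis
    by (simp add: Lim_transform_eventually)
qed

lemma harm_le_ln: "n \<ge> 1 \<Longrightarrow> harm n \<le> 1 + ln (real n)"
  using euler_mascheroni_sequence_decreasing[of 1 n] by (simp add: harm_expand)

lemma sum_inverse_Suc_le_ln: "i \<ge> 3 \<Longrightarrow> (\<Sum>z\<le>i. inverse (real z + 1)) \<le> 3 * ln (real i)"
proof -
  assume "i \<ge> 3"
  have "(\<Sum>z\<le>i. inverse (real z + 1)) = harm (Suc i)"
    unfolding harm_altdef lessThan_Suc_atMost by (simp add: add.commute)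
  moreover have "harm (Suc i) \<le> 1 + ln (real i + 1)"
    using harm_le_ln[of "Suc i"] by (simp add: add.commute)
  moreover have "ln (real i + 1) \<le> ln (2 * real i)"
    using \<open>i \<ge> 3\<close> by (subst ln_le_cancel_iff) auto
  moreover have "ln (2 * real i) = ln 2 + ln (real i)"
    using \<open>i \<ge> 3\<close> by (simp add: ln_mult)
  moreover have "ln 2 \<le> ln (real i)" "1 \<le> ln (real i)"
    using \<open>i \<ge> 3\<close> exp_le ln_le_cancel_iff[of "exp 1" "real i"] by auto
  ultimately show ?thesis
    by linarith
qed

section \<open>The law of \<open>T\<close>\<close>

lemma T_prob_Gamma_ratio: "T_prob a j = (1 + a) * Gamma (2 + a) / Gamma_ratio (2 + a) (real j + 1)"
  unfolding T_prob_def Gamma_ratio_def by (simp add: add_ac)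

lemma T_prob_pos: "a > -1 \<Longrightarrow> T_prob a j > 0"
  unfolding T_prob_Gamma_ratio by (simp add: Gamma_ratio_pos)

lemma T_prob_tail_LIMSEQ:
  assumes "a > -1"
  shows "(\<lambda>j. T_prob a j * (real j + 1) powr (2 + a)) \<longlonglongrightarrow> (1 + a) * Gamma (2 + a)"
proof -
  have "(\<lambda>j. Gamma_ratio (2 + a) (real j + 1) / (real j + 1) powr (2 + a)) \<longlonglongrightarrow> 1"
    using Gamma_ratio_LIMSEQ[of 1 "2 + a" 1] assms by simp
  from tendsto_mult[OF tendsto_const tendsto_inverse[OF this]]
  show ?thesis
    by (simp add: T_prob_Gamma_ratio)
qed

lemma T_prob_sums:
  assumes "a > -1"
  shows "T_prob a sums 1"
proof -
  define t where "t j = inverse (Gamma_ratio (1 + a) (real j + 1))" for j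
  have "(\<lambda>j. inverse (Gamma_ratio (1 + a) (real j + 1) / (real j + 1) powr (1 + a))
      * (real j + 1) powr - (1 + a)) \<longlonglongrightarrow> inverse 1 * 0"
    using assms Gamma_ratio_LIMSEQ[of 1 "1 + a" 1] by (intro tendsto_intros) (simp_all, real_asymp)
  moreover have "inverse (Gamma_ratio (1 + a) (real j + 1) / (real j + 1) powr (1 + a))
      * (real j + 1) powr - (1 + a) = t j" for j
    by (simp add: t_def divide_inverse flip: powr_add)
  ultimately have "t \<longlonglongrightarrow> 0"
    by simp
  then have "(\<lambda>j. Gamma (2 + a) * (t j - t (Suc j))) sums (Gamma (2 + a) * (t 0 - 0))"
    by (intro sums_mult telescope_sums')
  moreover have "Gamma (2 + a) * (t j - t (Suc j)) = T_prob a j" for j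
    using Gamma_ratio_telescope[of "real j + 1" "1 + a"] assms
    by (simp add: t_def T_prob_Gamma_ratio add_ac)
  moreover have "Gamma (2 + a) * t 0 = 1"
  proof -
    have "Gamma (a + 2) > 0" using assms by simp
    then show ?thesis by (simp add: t_def Gamma_ratio_def add_ac)
  qed
  ultimately show ?thesis
    by simp
qed

section \<open>Local tail asymptotics of convolution powers\<close>

lemma conv_pow_nonneg: "(\<And>j. p j \<ge> 0) \<Longrightarrow> conv_pow p n z \<ge> 0"
  by (induction n arbitrary: z) (auto intro!: sum_nonneg mult_nonneg_nonneg)

lemma conv_pow_sums:
  assumes "\<And>j. p j \<ge> 0" "p sums 1"
  shows "conv_pow p n sums 1"
proof (induction n)
  case 0
  show ?case
    using sums_single[of 0 "\<lambda>_. 1::real"] by simp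
next
  case (Suc n)
  have "summable (\<lambda>j. norm (p j))" "summable (\<lambda>j. norm (conv_pow p n j))"
    using assms Suc conv_pow_nonneg[of p n] by (simp_all add: sums_summable)
  from Cauchy_product_sums[OF this]
  show ?case
    using assms Suc by (simp add: sums_iff mult.commute)
qed

lemma convolution_split:
  fixes p q :: "nat \<Rightarrow> 'a :: comm_semiring_0" and i :: nat
  shows "(\<Sum>j\<le>i. q (i - j) * p j)
     = (\<Sum>j | 2 * j \<le> i. p j * q (i - j)) + (\<Sum>m | 2 * m < i. q m * p (i - m))"
proof -
  have "{..i} = {j. 2 * j \<le> i} \<union> {j. j \<le> i \<and> i < 2 * j}" by auto
  moreover have "finite {j. 2 * j \<le> i}"
    by (rule finite_subset[of _ "{..i}"]) auto
  ultimately have "(\<Sum>j\<le>i. q (i - j) * p j)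
      = (\<Sum>j | 2 * j \<le> i. q (i - j) * p j) + (\<Sum>j | j \<le> i \<and> i < 2 * j. q (i - j) * p j)"
    by (simp add: sum.union_disjoint[symmetric] disjoint_iff)
  also have "(\<Sum>j | j \<le> i \<and> i < 2 * j. q (i - j) * p j) = (\<Sum>m | 2 * m < i. q m * p (i - m))"
    by (rule sum.reindex_bij_witness[where i = "\<lambda>m. i - m" and j = "\<lambda>j. i - j"]) auto
  finally show ?thesis
    by (simp add: mult.commute)
qed

text \<open>On \<open>2 * j \<le> i\<close> the weight at \<open>i\<close> is at most \<open>2 powr e\<close> times the weight
  at \<open>i - j\<close>; this gives the domination needed for Tannery's theorem on each half of a
  convolution.\<close>

lemma shifted_tail_le:
  fixes q :: "nat \<Rightarrow> real"
  assumes "e \<ge> 0" "\<And>j. q j \<ge> 0" "\<And>j. q j * (real j + 1) powr e \<le> Q" "2 * j \<le> i"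
  shows "q (i - j) * (real i + 1) powr e \<le> 2 powr e * Q"
proof -
  have "(real i + 1) powr e \<le> (2 * (real (i - j) + 1)) powr e"
    using assms by (intro powr_mono2) (auto simp: of_nat_diff)
  also have "\<dots> = 2 powr e * (real (i - j) + 1) powr e"
    by (rule powr_mult)
  finally have "q (i - j) * (real i + 1) powr e \<le> q (i - j) * (2 powr e * (real (i - j) + 1) powr e)"
    using assms(2) by (rule mult_left_mono)
  also have "\<dots> \<le> 2 powr e * Q"
    using assms(3)[of "i - j"] by (simp add: mult.left_commute)
  finally show ?thesis .
qed

lemma half_convolution_le:
  fixes p q :: "nat \<Rightarrow> real"
  assumes "e \<ge> 0" "\<And>j. p j \<ge> 0" "\<And>j. q j \<ge> 0" "\<And>j. q j * (real j + 1) powr e \<le> Q"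
    and "J \<subseteq> {j. 2 * j \<le> i}"
  shows "(\<Sum>j\<in>J. p j * q (i - j)) * (real i + 1) powr e \<le> 2 powr e * Q * (\<Sum>j\<in>J. p j)"
proof -
  have "(\<Sum>j\<in>J. p j * (q (i - j) * (real i + 1) powr e)) \<le> (\<Sum>j\<in>J. p j * (2 powr e * Q))"
    using assms shifted_tail_le[OF assms(1,3,4)] by (intro sum_mono mult_left_mono) auto
  then show ?thesis
    by (simp add: sum_distrib_left sum_distrib_right mult_ac)
qed

lemma shifted_tail_LIMSEQ:
  fixes q :: "nat \<Rightarrow> real"
  assumes "(\<lambda>j. q j * (real j + 1) powr e) \<longlonglongrightarrow> L"
  shows "(\<lambda>i. q (i - j) * (real i + 1) powr e) \<longlonglongrightarrow> L"
proof -
  have "(\<lambda>i. q (i - j) * (real (i - j) + 1) powr e) \<longlonglongrightarrow> L"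
    using filterlim_compose[OF assms filterlim_minus_const_nat_at_top] .
  moreover have "(\<lambda>i. ((real i + 1) / (real i - real j + 1)) powr e) \<longlonglongrightarrow> 1"
    by real_asymp
  ultimately have "(\<lambda>i. q (i - j) * (real (i - j) + 1) powr e * ((real i + 1) / (real i - real j + 1)) powr e)
      \<longlonglongrightarrow> L * 1"
    by (rule tendsto_mult)
  moreover have "eventually (\<lambda>i. q (i - j) * (real (i - j) + 1) powr e
      * ((real i + 1) / (real i - real j + 1)) powr e = q (i - j) * (real i + 1) powr e) sequentially"
    using eventually_ge_at_top[of j] by eventually_elim (simp add: of_nat_diff powr_divide)
  ultimately show ?thesis
    by (simp add: Lim_transform_eventually)
qed

lemma half_convolution_LIMSEQ:
  fixes p q :: "nat \<Rightarrow> real"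
  assumes "e \<ge> 0" "\<And>j. p j \<ge> 0" "summable p" "\<And>j. q j \<ge> 0"
    and q_tail: "(\<lambda>j. q j * (real j + 1) powr e) \<longlonglongrightarrow> L"
    and "\<And>j. q j * (real j + 1) powr e \<le> Q"
    and J: "\<And>i. J i \<subseteq> {j. 2 * j \<le> i}" "\<And>j. eventually (\<lambda>i. j \<in> J i) sequentially"
  shows "(\<lambda>i. (\<Sum>j\<in>J i. p j * q (i - j)) * (real i + 1) powr e) \<longlonglongrightarrow> suminf p * L"
proof -
  define A where "A j i = (if j \<in> J i then p j * q (i - j) * (real i + 1) powr e else 0)" for j i
  have A_lim: "(\<lambda>i. A j i) \<longlonglongrightarrow> p j * L" for j
  proof -
    have "eventually (\<lambda>i. p j * (q (i - j) * (real i + 1) powr e) = A j i) sequentially"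
      using J(2)[of j] by eventually_elim (simp add: A_def)
    with tendsto_mult_left[OF shifted_tail_LIMSEQ[OF q_tail]] show ?thesis
      by (rule Lim_transform_eventually)
  qed
  have "Q \<ge> 0"
    using assms(4)[of 0] assms(6)[of 0] by (smt (verit) mult_nonneg_nonneg powr_ge_zero)
  then have "norm (A j i) \<le> p j * (2 powr e * Q)" for j i
    using shifted_tail_le[OF assms(1,4,6), of j i] J(1)[of i] assms(2)[of j] assms(4)[of "i - j"]
    by (auto simp: A_def mult.assoc intro: mult_left_mono)
  then have "eventually (\<lambda>(j, i). norm (A j i) \<le> p j * (2 powr e * Q)) (at_top \<times>\<^sub>F sequentially)"
    by (intro always_eventually) auto
  from tannerys_theorem[OF A_lim this summable_mult2[OF assms(3)]]
  have "(\<lambda>i. \<Sum>j. A j i) \<longlonglongrightarrow> (\<Sum>j. p j * L)"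
    by simp
  moreover have "(\<Sum>j. A j i) = (\<Sum>j\<in>J i. p j * q (i - j)) * (real i + 1) powr e" for i
  proof -
    have "J i \<subseteq> {..i}" using J(1)[of i] by auto
    then have "(\<Sum>j. A j i) = (\<Sum>j\<le>i. A j i)"
      by (intro suminf_finite) (auto simp: A_def)
    also have "\<dots> = (\<Sum>j\<in>J i. p j * q (i - j) * (real i + 1) powr e)"
      using \<open>J i \<subseteq> {..i}\<close> unfolding A_def by (simp add: sum.inter_restrict[symmetric] Int_absorb1 Int_absorb2)
    finally show ?thesis by (simp add: sum_distrib_right)
  qed
  ultimately show ?thesis
    using suminf_mult2[OF assms(3), of L] by simp
qed

lemma convolution_tail_LIMSEQ:
  fixes p q :: "nat \<Rightarrow> real"
  assumes "e \<ge> 0"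
    and p: "\<And>j. p j \<ge> 0" "p sums 1" "(\<lambda>j. p j * (real j + 1) powr e) \<longlonglongrightarrow> c"
      "\<And>j. p j * (real j + 1) powr e \<le> P"
    and q: "\<And>j. q j \<ge> 0" "q sums 1" "(\<lambda>j. q j * (real j + 1) powr e) \<longlonglongrightarrow> L"
      "\<And>j. q j * (real j + 1) powr e \<le> Q"
  shows "(\<lambda>i. (\<Sum>j\<le>i. q (i - j) * p j) * (real i + 1) powr e) \<longlonglongrightarrow> L + c"
proof -
  have "(\<lambda>i. (\<Sum>j | 2 * j \<le> i. p j * q (i - j)) * (real i + 1) powr e) \<longlonglongrightarrow> suminf p * L"
    using eventually_ge_at_top
    by (intro half_convolution_LIMSEQ[OF assms(1) p(1) sums_summable[OF p(2)] q(1,3,4)]) auto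
  moreover have "(\<lambda>i. (\<Sum>m | 2 * m < i. q m * p (i - m)) * (real i + 1) powr e) \<longlonglongrightarrow> suminf q * c"
    using eventually_gt_at_top
    by (intro half_convolution_LIMSEQ[OF assms(1) q(1) sums_summable[OF q(2)] p(1,3,4)]) auto
  ultimately have "(\<lambda>i. (\<Sum>j | 2 * j \<le> i. p j * q (i - j)) * (real i + 1) powr e
      + (\<Sum>m | 2 * m < i. q m * p (i - m)) * (real i + 1) powr e) \<longlonglongrightarrow> 1 * L + 1 * c"
    using p(2) q(2) by (simp add: sums_iff tendsto_add)
  then show ?thesis
    by (simp add: convolution_split distrib_right)
qed

lemma convolution_tail_le:
  fixes p q :: "nat \<Rightarrow> real"
  assumes "e \<ge> 0"
    and p: "\<And>j. p j \<ge> 0" "p sums 1" "\<And>j. p j * (real j + 1) powr e \<le> P"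
    and q: "\<And>j. q j \<ge> 0" "q sums 1" "\<And>j. q j * (real j + 1) powr e \<le> Q"
  shows "(\<Sum>j\<le>i. q (i - j) * p j) * (real i + 1) powr e \<le> 2 powr e * (Q + P)"
proof -
  have sum_le_1: "sum f J \<le> 1" if "\<And>j. f j \<ge> 0" "f sums 1" "finite J" for f :: "nat \<Rightarrow> real" and J
    using sum_le_suminf[OF sums_summable[OF that(2)] that(3)] that by (simp add: sums_iff)
  have fin: "finite {j. 2 * j \<le> i}" "finite {m. 2 * m < i}"
    by (rule finite_subset[of _ "{..i}"]; auto)+
  have "P \<ge> 0" "Q \<ge> 0"
    using p(1,3)[of 0] q(1,3)[of 0] by simp_all
  have "(\<Sum>j | 2 * j \<le> i. p j * q (i - j)) * (real i + 1) powr e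
      \<le> 2 powr e * Q * (\<Sum>j | 2 * j \<le> i. p j)"
    by (rule half_convolution_le[OF assms(1) p(1) q(1,3)]) auto
  also have "\<dots> \<le> 2 powr e * Q"
    using mult_left_mono[OF sum_le_1[OF p(1,2) fin(1)], of "2 powr e * Q"] \<open>Q \<ge> 0\<close> by simp
  finally have "(\<Sum>j | 2 * j \<le> i. p j * q (i - j)) * (real i + 1) powr e \<le> 2 powr e * Q" .
  moreover have "(\<Sum>m | 2 * m < i. q m * p (i - m)) * (real i + 1) powr e
      \<le> 2 powr e * P * (\<Sum>m | 2 * m < i. q m)"
    by (rule half_convolution_le[OF assms(1) q(1) p(1,3)]) auto
  moreover have "\<dots> \<le> 2 powr e * P"
    using mult_left_mono[OF sum_le_1[OF q(1,2) fin(2)], of "2 powr e * P"] \<open>P \<ge> 0\<close> by simp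
  ultimately have "(\<Sum>j | 2 * j \<le> i. p j * q (i - j)) * (real i + 1) powr e
      + (\<Sum>m | 2 * m < i. q m * p (i - m)) * (real i + 1) powr e \<le> 2 powr e * Q + 2 powr e * P"
    by linarith
  then show ?thesis
    by (simp add: convolution_split distrib_right distrib_left)
qed

lemma conv_pow_tail_le:
  fixes p :: "nat \<Rightarrow> real"
  assumes "e \<ge> 0" "\<And>j. p j \<ge> 0" "p sums 1" and P: "\<And>j. p j * (real j + 1) powr e \<le> P"
  shows "conv_pow p n i * (real i + 1) powr e \<le> (2 powr e * (1 + P)) ^ n"
proof (induction n arbitrary: i)
  case 0
  show ?case by simp
next
  case (Suc n)
  let ?K = "2 powr e * (1 + P)"
  have "P \<ge> 0" "1 \<le> 2 powr e"
    using assms(2)[of 0] P[of 0] \<open>e \<ge> 0\<close> by (auto intro: ge_one_powr_ge_zero)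
  then have "1 \<le> ?K"
    using mult_mono[of 1 "2 powr e" 1 "1 + P"] by simp
  then have "P \<le> P * ?K ^ n"
    using mult_left_mono[OF one_le_power \<open>P \<ge> 0\<close>] by simp
  have "conv_pow p (Suc n) i * (real i + 1) powr e \<le> 2 powr e * (?K ^ n + P)"
    using convolution_tail_le[OF assms conv_pow_nonneg[OF assms(2)] conv_pow_sums[OF assms(2,3)] Suc]
    by simp
  also have "\<dots> \<le> 2 powr e * (?K ^ n + P * ?K ^ n)"
    using \<open>P \<le> P * ?K ^ n\<close> by (intro mult_left_mono) auto
  also have "\<dots> = ?K ^ Suc n"
    by (simp add: algebra_simps)
  finally show ?case .
qed

lemma conv_pow_tail_LIMSEQ:
  fixes p :: "nat \<Rightarrow> real"
  assumes "e \<ge> 0" "\<And>j. p j \<ge> 0" "p sums 1"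
    and p_tail: "(\<lambda>j. p j * (real j + 1) powr e) \<longlonglongrightarrow> c"
  shows "(\<lambda>i. conv_pow p n i * (real i + 1) powr e) \<longlonglongrightarrow> real n * c"
proof (induction n)
  case 0
  have "eventually (\<lambda>i. conv_pow p 0 i * (real i + 1) powr e = 0) sequentially"
    using eventually_gt_at_top[of 0] by eventually_elim simp
  then show ?case
    by (simp add: tendsto_eventually)
next
  case (Suc n)
  obtain P where "\<And>j. norm (p j * (real j + 1) powr e) \<le> P"
    using BseqE[OF convergent_imp_Bseq[OF convergentI[OF p_tail]]] by blast
  then have P: "p j * (real j + 1) powr e \<le> P" for j
    by (simp add: abs_le_iff)
  from convolution_tail_LIMSEQ[OF assms P conv_pow_nonneg[OF assms(2)]
      conv_pow_sums[OF assms(2,3)] Suc conv_pow_tail_le[OF assms(1-3) P]]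
  show ?case
    by (simp add: algebra_simps)
qed

section \<open>Truncated Gamma moments\<close>

definition truncated_Gamma_moment :: "real \<Rightarrow> nat \<Rightarrow> nat \<Rightarrow> real" where
  "truncated_Gamma_moment a n i =
     (\<Sum>z\<le>i. conv_pow (T_prob a) n z * Gamma_ratio (a + 1) (real z + 2 * real n))"

lemma truncated_Gamma_moment_nonneg:
  "a > -1 \<Longrightarrow> n \<ge> 1 \<Longrightarrow> truncated_Gamma_moment a n i \<ge> 0"
  unfolding truncated_Gamma_moment_def
  by (intro sum_nonneg mult_nonneg_nonneg conv_pow_nonneg less_imp_le[OF T_prob_pos]
      less_imp_le[OF Gamma_ratio_pos]) auto

lemma truncated_Gamma_moment_div_ln_LIMSEQ:
  assumes "a > -1" "n \<ge> 1"
  shows "(\<lambda>i. truncated_Gamma_moment a n i / ln (real i)) \<longlonglongrightarrow> real n * ((1 + a) * Gamma (2 + a))"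
  unfolding truncated_Gamma_moment_def
proof (rule sum_div_ln_LIMSEQ)
  have tail: "(\<lambda>z. conv_pow (T_prob a) n z * (real z + 1) powr (2 + a)) \<longlonglongrightarrow> real n * ((1 + a) * Gamma (2 + a))"
    using assms by (intro conv_pow_tail_LIMSEQ T_prob_sums T_prob_tail_LIMSEQ less_imp_le[OF T_prob_pos]) auto
  have ratio: "(\<lambda>z. Gamma_ratio (a + 1) (real z + 2 * real n) / (real z + 1) powr (a + 1)) \<longlonglongrightarrow> 1"
    using Gamma_ratio_LIMSEQ[of "2 * real n" "a + 1" 1] assms by simp
  have "(\<lambda>z. real z / (real z + 1)) \<longlonglongrightarrow> 1"
    by real_asymp
  from tendsto_mult[OF tendsto_mult[OF tail ratio] this]
  have "(\<lambda>z. conv_pow (T_prob a) n z * (real z + 1) powr (2 + a)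
      * (Gamma_ratio (a + 1) (real z + 2 * real n) / (real z + 1) powr (a + 1))
      * (real z / (real z + 1))) \<longlonglongrightarrow> real n * ((1 + a) * Gamma (2 + a)) * 1 * 1" .
  moreover have "(real z + 1) powr (2 + a) = (real z + 1) powr (a + 1) * (real z + 1)" for z
    using powr_add[of "real z + 1" "a + 1" 1] by (simp add: add_ac)
  ultimately show "(\<lambda>z. real z * (conv_pow (T_prob a) n z * Gamma_ratio (a + 1) (real z + 2 * real n)))
      \<longlonglongrightarrow> real n * ((1 + a) * Gamma (2 + a))"
    by (simp add: mult_ac)
qed

lemma conv_pow_T_prob_Gamma_ratio_le:
  assumes "a > -1"
  obtains C L where "C > 0" "L > 0" "\<And>n z. n \<ge> 1 \<Longrightarrow>
    conv_pow (T_prob a) n z * Gamma_ratio (a + 1) (real z + 2 * real n) \<le> C * L ^ n * inverse (real z + 1)"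
proof -
  obtain P where "\<And>j. norm (T_prob a j * (real j + 1) powr (2 + a)) \<le> P"
    using BseqE[OF convergent_imp_Bseq[OF convergentI[OF T_prob_tail_LIMSEQ[OF assms]]]] by blast
  then have P: "T_prob a j * (real j + 1) powr (2 + a) \<le> P" for j
    by (simp add: abs_le_iff)
  define K where "K = 2 powr (2 + a) * (1 + P)"
  have K: "conv_pow (T_prob a) n z * (real z + 1) powr (2 + a) \<le> K ^ n" for n z
    unfolding K_def using assms
    by (intro conv_pow_tail_le T_prob_sums P less_imp_le[OF T_prob_pos]) auto
  have "K > 0"
    using P[of 0] T_prob_pos[OF assms, of 0] by (simp add: K_def)
  obtain C where "C > 0" and C: "\<And>n z. n \<ge> 1 \<Longrightarrow>
      Gamma_ratio (a + 1) (real z + 2 * real n) \<le> C * (3 powr (a + 1)) ^ n * (real z + 1) powr (a + 1)"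
    using Gamma_ratio_le_three_pow[of "a + 1"] assms by auto
  show ?thesis
  proof (rule that[of C "K * 3 powr (a + 1)"])
    show "C > 0" "K * 3 powr (a + 1) > 0" using \<open>C > 0\<close> \<open>K > 0\<close> by simp_all
    fix n z :: nat assume "n \<ge> 1"
    have "conv_pow (T_prob a) n z \<le> K ^ n / (real z + 1) powr (2 + a)"
      using K[of n z] by (simp add: pos_le_divide_eq)
    moreover have "conv_pow (T_prob a) n z \<ge> 0"
      using T_prob_pos[OF assms] by (intro conv_pow_nonneg less_imp_le)
    moreover have "Gamma_ratio (a + 1) (real z + 2 * real n) \<ge> 0"
      using assms \<open>n \<ge> 1\<close> by (intro less_imp_le Gamma_ratio_pos) auto
    ultimately have "conv_pow (T_prob a) n z * Gamma_ratio (a + 1) (real z + 2 * real n)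
        \<le> K ^ n / (real z + 1) powr (2 + a) * (C * (3 powr (a + 1)) ^ n * (real z + 1) powr (a + 1))"
      using C[OF \<open>n \<ge> 1\<close>, of z] \<open>K > 0\<close> by (intro mult_mono) simp_all
    also have "(real z + 1) powr (2 + a) = (real z + 1) powr (a + 1) * (real z + 1)"
      using powr_add[of "real z + 1" "a + 1" 1] by (simp add: add_ac)
    also have "K ^ n / ((real z + 1) powr (a + 1) * (real z + 1))
        * (C * (3 powr (a + 1)) ^ n * (real z + 1) powr (a + 1))
        = C * (K * 3 powr (a + 1)) ^ n * inverse (real z + 1)"
      by (simp add: power_mult_distrib) (simp add: divide_inverse mult_ac)
    finally show "conv_pow (T_prob a) n z * Gamma_ratio (a + 1) (real z + 2 * real n)
        \<le> C * (K * 3 powr (a + 1)) ^ n * inverse (real z + 1)" .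
  qed
qed

lemma truncated_Gamma_moment_le:
  assumes "a > -1"
  obtains D L where "D > 0" "L > 0"
    "\<And>n i. n \<ge> 1 \<Longrightarrow> i \<ge> 3 \<Longrightarrow> truncated_Gamma_moment a n i \<le> D * L ^ n * ln (real i)"
proof -
  obtain C L where "C > 0" "L > 0" and term_le: "\<And>n z. n \<ge> 1 \<Longrightarrow>
      conv_pow (T_prob a) n z * Gamma_ratio (a + 1) (real z + 2 * real n) \<le> C * L ^ n * inverse (real z + 1)"
    using conv_pow_T_prob_Gamma_ratio_le[OF assms] by blast
  show ?thesis
  proof (rule that[of "3 * C" L])
    fix n i :: nat assume "n \<ge> 1" "i \<ge> 3"
    have "truncated_Gamma_moment a n i \<le> (\<Sum>z\<le>i. C * L ^ n * inverse (real z + 1))"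
      unfolding truncated_Gamma_moment_def using term_le \<open>n \<ge> 1\<close> by (intro sum_mono) auto
    also have "\<dots> \<le> C * L ^ n * (3 * ln (real i))"
      using sum_inverse_Suc_le_ln[OF \<open>i \<ge> 3\<close>] \<open>C > 0\<close> \<open>L > 0\<close>
      by (simp add: sum_distrib_left[symmetric])
    finally show "truncated_Gamma_moment a n i \<le> 3 * C * L ^ n * ln (real i)"
      by (simp add: mult_ac)
  qed (use \<open>C > 0\<close> \<open>L > 0\<close> in auto)
qed

section \<open>The Poisson mixture\<close>

lemma poisson_prob_nonneg: "lam \<ge> 0 \<Longrightarrow> poisson_prob lam n \<ge> 0"
  unfolding poisson_prob_def by simp

lemma poisson_prob_mean_sums: "(\<lambda>n. poisson_prob lam n * real n) sums lam"
proof -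
  have "(\<lambda>n. lam * exp (- lam) * (lam ^ n / fact n)) sums (lam * exp (- lam) * exp lam)"
    using exp_converges[of lam] by (intro sums_mult) (simp add: divide_inverse mult.commute)
  moreover have "lam * exp (- lam) * (lam ^ n / fact n) = poisson_prob lam (Suc n) * real (Suc n)" for n
    by (simp add: poisson_prob_def field_simps del: of_nat_Suc)
  moreover have "lam * exp (- lam) * exp lam = lam"
    by (simp add: exp_minus)
  ultimately have "(\<lambda>n. poisson_prob lam (Suc n) * real (Suc n)) sums lam"
    by simp
  then show ?thesis
    using sums_Suc_iff[of "\<lambda>n. poisson_prob lam n * real n" lam] by simp
qed

lemma summable_poisson_prob_power: "summable (\<lambda>n. poisson_prob lam n * L ^ n)"
proof -
  have "summable (\<lambda>n. exp (- lam) * ((lam * L) ^ n / fact n))"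
    using summable_exp[of "lam * L"] by (intro summable_mult) (simp add: divide_inverse mult.commute)
  then show ?thesis
    by (simp add: poisson_prob_def power_mult_distrib mult.assoc)
qed

definition y_term :: "real \<Rightarrow> real \<Rightarrow> nat \<Rightarrow> nat \<Rightarrow> real" where
  "y_term lam a n i = (if n \<ge> 1 then poisson_prob lam n *
     (truncated_Gamma_moment a n i / Gamma_ratio (a + 2) (real i + 2 * real n)) else 0)"

lemma y_seq_eq: "y_seq lam k i = (1 + real k / lam) * (\<Sum>n. y_term lam (real k / lam) n i)"
proof -
  have "(\<Sum>z\<le>i. conv_pow (T_prob a) n z * (Gamma (real i + 2 * real n) / Gamma (real i + 2 * real n + a + 2))
        * (Gamma (real z + 2 * real n + a + 1) / Gamma (real z + 2 * real n)))
      = truncated_Gamma_moment a n i / Gamma_ratio (a + 2) (real i + 2 * real n)" for a n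
    unfolding truncated_Gamma_moment_def sum_divide_distrib
    by (rule sum.cong) (simp_all add: Gamma_ratio_def add_ac mult_ac)
  then show ?thesis
    unfolding y_seq_def y_term_def Let_def by presburger
qed

lemma y_term_scaled_LIMSEQ:
  assumes "a > -1"
  shows "(\<lambda>i. y_term lam a n i * real i powr (a + 2) / ln (real i))
    \<longlonglongrightarrow> poisson_prob lam n * real n * ((1 + a) * Gamma (2 + a))"
proof (cases "n \<ge> 1")
  case True
  have "(\<lambda>i. Gamma_ratio (a + 2) (real i + 2 * real n) / (real i + 0) powr (a + 2)) \<longlonglongrightarrow> 1"
    using Gamma_ratio_LIMSEQ[of "2 * real n" "a + 2" 0] True assms by simp
  from tendsto_inverse[OF this] truncated_Gamma_moment_div_ln_LIMSEQ[OF assms True]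
  have "(\<lambda>i. poisson_prob lam n * (real i powr (a + 2) / Gamma_ratio (a + 2) (real i + 2 * real n)
      * (truncated_Gamma_moment a n i / ln (real i)))) \<longlonglongrightarrow> poisson_prob lam n * (1 * (real n * ((1 + a) * Gamma (2 + a))))"
    by (intro tendsto_intros) simp_all
  then show ?thesis
    using True by (simp add: y_term_def mult_ac)
next
  case False
  then have "n = 0" by simp
  then show ?thesis by (simp add: y_term_def)
qed

lemma y_term_scaled_le:
  assumes "lam \<ge> 0" "a > -1"
  obtains M where "summable M"
    "\<And>n i. i \<ge> 3 \<Longrightarrow> norm (y_term lam a n i * real i powr (a + 2) / ln (real i)) \<le> M n"
proof -
  obtain C where "C > 0"
    and C: "\<And>x y :: nat. 1 \<le> y \<Longrightarrow> x \<le> y \<Longrightarrow> real x powr (a + 2) / Gamma_ratio (a + 2) (real y) \<le> C"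
    using powr_div_Gamma_ratio_le[of "a + 2"] assms by auto
  obtain D L where "D > 0" "L > 0"
    and D: "\<And>n i. n \<ge> 1 \<Longrightarrow> i \<ge> 3 \<Longrightarrow> truncated_Gamma_moment a n i \<le> D * L ^ n * ln (real i)"
    using truncated_Gamma_moment_le[OF assms(2)] by blast
  show ?thesis
  proof (rule that[of "\<lambda>n. poisson_prob lam n * (C * (D * L ^ n))"])
    show "summable (\<lambda>n. poisson_prob lam n * (C * (D * L ^ n)))"
      using summable_mult[OF summable_poisson_prob_power[of lam L], of "C * D"] by (simp add: mult_ac)
    fix n i :: nat assume "i \<ge> 3"
    define R where "R = real i powr (a + 2) / Gamma_ratio (a + 2) (real i + 2 * real n)"
    define T where "T = truncated_Gamma_moment a n i / ln (real i)"
    have "0 \<le> poisson_prob lam n" "0 \<le> C * (D * L ^ n)"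
      using assms \<open>C > 0\<close> \<open>D > 0\<close> \<open>L > 0\<close> by (simp_all add: poisson_prob_nonneg)
    moreover have "0 \<le> R" "R \<le> C" "0 \<le> T" "T \<le> D * L ^ n" if "n \<ge> 1"
    proof -
      have "ln (real i) > 0" using \<open>i \<ge> 3\<close> by simp
      then show "0 \<le> T" "T \<le> D * L ^ n"
        using truncated_Gamma_moment_nonneg[OF assms(2) that] D[OF that \<open>i \<ge> 3\<close>]
        by (simp_all add: T_def pos_divide_le_eq)
      show "0 \<le> R"
        unfolding R_def using Gamma_ratio_pos[of "real i + 2 * real n" "a + 2"] that assms by simp
      show "R \<le> C"
        unfolding R_def using C[of "i + 2 * n" i] that by simp
    qed
    moreover have "y_term lam a n i * real i powr (a + 2) / ln (real i)
        = (if n \<ge> 1 then poisson_prob lam n * (R * T) else 0)"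
      by (simp add: y_term_def R_def T_def)
    ultimately show "norm (y_term lam a n i * real i powr (a + 2) / ln (real i))
        \<le> poisson_prob lam n * (C * (D * L ^ n))"
      by (auto intro!: mult_left_mono mult_mono)
  qed
qed

lemma suminf_y_term_scaled_LIMSEQ:
  assumes "lam \<ge> 0" "a > -1"
  shows "(\<lambda>i. (\<Sum>n. y_term lam a n i) * real i powr (a + 2) / ln (real i))
    \<longlonglongrightarrow> lam * ((1 + a) * Gamma (2 + a))"
proof -
  obtain M where "summable M"
    and M: "\<And>n i. i \<ge> 3 \<Longrightarrow> norm (y_term lam a n i * real i powr (a + 2) / ln (real i)) \<le> M n"
    using y_term_scaled_le[OF assms] by blast
  have "eventually (\<lambda>(n, i). norm (y_term lam a n i * real i powr (a + 2) / ln (real i)) \<le> M n)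
      (at_top \<times>\<^sub>F sequentially)"
    unfolding eventually_prod_sequentially using M by blast
  from tannerys_theorem[OF y_term_scaled_LIMSEQ[OF assms(2)] this \<open>summable M\<close>]
  have tannery:
    "eventually (\<lambda>i. summable (\<lambda>n. norm (y_term lam a n i * real i powr (a + 2) / ln (real i)))) sequentially"
    "(\<lambda>i. \<Sum>n. y_term lam a n i * real i powr (a + 2) / ln (real i))
       \<longlonglongrightarrow> (\<Sum>n. poisson_prob lam n * real n * ((1 + a) * Gamma (2 + a)))"
    by simp_all
  have "(\<Sum>n. poisson_prob lam n * real n * ((1 + a) * Gamma (2 + a))) = lam * ((1 + a) * Gamma (2 + a))"
    using sums_mult2[OF poisson_prob_mean_sums[of lam]] by (simp add: sums_iff)
  moreover have "eventually (\<lambda>i. (\<Sum>n. y_term lam a n i * real i powr (a + 2) / ln (real i))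
      = (\<Sum>n. y_term lam a n i) * real i powr (a + 2) / ln (real i)) sequentially"
    using tannery(1) eventually_ge_at_top[of 2]
  proof eventually_elim
    case (elim i)
    have "real i powr (a + 2) \<noteq> 0" "ln (real i) \<noteq> 0"
      using \<open>i \<ge> 2\<close> by simp_all
    then have "summable (\<lambda>n. y_term lam a n i)"
      using summable_norm_cancel[OF elim(1)] by (simp add: mult.commute[of _ "real i powr (a + 2)"])
    from suminf_divide[OF summable_mult2[OF this]] suminf_mult2[OF this]
    show ?case
      by simp
  qed
  ultimately show ?thesis
    using tannery(2) by (simp add: Lim_transform_eventually)
qed

lemma y_seq_scaled_LIMSEQ:
  fixes lam :: real and k :: nat
  assumes "lam > 0"
  defines "a \<equiv> real k / lam"
  shows "(\<lambda>i. y_seq lam k i / (real i powr (-2 - a) * ln (real i)))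
    \<longlonglongrightarrow> lam * (1 + a)\<^sup>2 * Gamma (2 + a)"
proof -
  have "a \<ge> 0" using assms by (simp add: a_def)
  have "-2 - a = - (a + 2)" by simp
  then have "real i powr (-2 - a) = inverse (real i powr (a + 2))" for i
    by (simp only: powr_minus)
  then have eq: "y_seq lam k i / (real i powr (-2 - a) * ln (real i))
      = (1 + a) * ((\<Sum>n. y_term lam a n i) * real i powr (a + 2) / ln (real i))" for i
    unfolding y_seq_eq a_def[symmetric] by (simp add: divide_inverse)
  have "(\<lambda>i. (\<Sum>n. y_term lam a n i) * real i powr (a + 2) / ln (real i))
      \<longlonglongrightarrow> lam * ((1 + a) * Gamma (2 + a))"
    using suminf_y_term_scaled_LIMSEQ[of lam a] \<open>lam > 0\<close> \<open>a \<ge> 0\<close> by simp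
  from tendsto_mult_left[OF this, of "1 + a"] show ?thesis
    unfolding eq by (simp add: power2_eq_square mult_ac)
qed

theorem mainTheorem2:
  fixes lam :: real and k :: nat
  assumes "lam > 0" and "k \<ge> 1"
  shows "(\<lambda>i. y_seq lam k i) \<sim>[sequentially]
    (\<lambda>i. lam * (1 + real k / lam)^2 * Gamma (2 + real k / lam)
          * real i powr (-2 - real k / lam) * ln (real i))"
proof -
  have "real k / lam \<ge> 0"
    using assms(1) by simp
  then have "(1 + real k / lam)\<^sup>2 > 0" "Gamma (2 + real k / lam) > 0"
    by simp_all
  then have "lam * (1 + real k / lam)\<^sup>2 * Gamma (2 + real k / lam) > 0"
    using assms by simp
  then have "lam * (1 + real k / lam)\<^sup>2 * Gamma (2 + real k / lam) \<noteq> 0"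
    by linarith
  with y_seq_scaled_LIMSEQ[OF assms(1), of k]
  have "(\<lambda>i. y_seq lam k i) \<sim>[sequentially] (\<lambda>i. lam * (1 + real k / lam)\<^sup>2 * Gamma (2 + real k / lam)
      * (real i powr (-2 - real k / lam) * ln (real i)))"
    by (rule asymp_equivI'_const)
  then show ?thesis
    by (simp add: mult.assoc)
qed

end
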